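(* Consider the two-stage cooperative cellular/D2D model and the packet grouping procedure described in the context. Every coded packet in the group $\mathcal{M}_l$ cannot be sent by any single device in one D2D transmission, but it can be split into two coded packets (each an XOR of a subset of its constituent packets), each of which is held in full by some device; hence its content can be delivered to all devices over D2D links in exactly two transmission slots.
   Context: Model: a set $\mathcal{N}$ of $N\ge 2$ cooperating devices want a finite packet set $\mathcal{M}$. After a lossy first-stage cellular broadcast, device $n$ holds $\mathcal{H}_n\subseteq\mathcal{M}$ and misses $\mathcal{W}_n=\mathcal{M}\setminus\mathcal{H}_n$; every packet of $\mathcal{M}$ is wanted by some device. Over D2D, a device can broadcast to all other devices a coded packet only if it holds all uncoded packets it is composed of; a coded packet is instantly decodable for a device if it contains exactly one packet from that device's Wants set. Grouping procedure: process the packets $p_1,\dots,p_M$ of $\mathcal{M}$ in order. For $p_m$ form a vector $v_m$ of length $N$ with $v_m[n]=p_m$ if $p_m\in\mathcal{W}_n$ and $v_m[n]=\mathrm{NULL}$ otherwise. If some previously formed vector $v_{m'}$ satisfies $v_{m'}[n]=\mathrm{NULL}$ for every $n$ with $v_m[n]=p_m$, replace $v_{m'}$ by the entrywise sum $v_{m'}+v_m$ (with $p+\mathrm{NULL}=p$) and discard $v_m$; otherwise keep $v_m$. Each final vector defines a coded packet, the XOR of the distinct packets among its non-NULL entries. $\mathcal{M}_c$ consists of the coded packets of vectors whose entries are all equal and non-NULL; $\mathcal{M}_d$ of those of vectors with at least one NULL entry; $\mathcal{M}_l$ of those of the remaining vectors (no NULL entry and at least two distinct entries), i.e., each packet in $\mathcal{M}_l$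 contains exactly one packet from each $\mathcal{W}_n$ and at least two distinct packets. *)

theory Defs
  imports Main
begin

text \<open>A vector of length N is a map from
devices to packet options (None = NULL); entries outside the device set are None.
A coded packet (XOR of distinct packets) is represented by the set of its
constituent uncoded packets; XOR of coded packets built from disjoint sets
corresponds to their union.\<close>

definition wants :: "'p set \<Rightarrow> ('d \<Rightarrow> 'p set) \<Rightarrow> 'd \<Rightarrow> 'p set" where
  "wants M H n = M - H n"

definition pvec :: "'d set \<Rightarrow> 'p set \<Rightarrow> ('d \<Rightarrow> 'p set) \<Rightarrow> 'p \<Rightarrow> ('d \<Rightarrow> 'p option)" where
  "pvec N M H p = (\<lambda>n. if n \<in> N \<and> p \<in> wants M H n then Some p else None)"

definition absorbs :: "('d \<Rightarrow> 'p option) \<Rightarrow> ('d \<Rightarrow> 'p option) \<Rightarrow> bool" where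
  "absorbs v' v = (\<forall>n. v n \<noteq> None \<longrightarrow> v' n = None)"

definition vadd :: "('d \<Rightarrow> 'p option) \<Rightarrow> ('d \<Rightarrow> 'p option) \<Rightarrow> ('d \<Rightarrow> 'p option)" where
  "vadd v' v = (\<lambda>n. case v n of None \<Rightarrow> v' n | Some p \<Rightarrow> Some p)"

text \<open>The grouping procedure, processing the packet list in order. When several
previously formed vectors can absorb the new one, any of them may be chosen
(the statement is proved for every such choice).\<close>
inductive grouping :: "'d set \<Rightarrow> 'p set \<Rightarrow> ('d \<Rightarrow> 'p set) \<Rightarrow> 'p list \<Rightarrow> ('d \<Rightarrow> 'p option) list \<Rightarrow> bool"
  for N M H where
  start: "grouping N M H [] []"
| merge: "grouping N M H ps vs \<Longrightarrow> i < length vs \<Longrightarrow> absorbs (vs ! i) (pvec N M H p) \<Longrightarrow>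
          grouping N M H (ps @ [p]) (vs[i := vadd (vs ! i) (pvec N M H p)])"
| keep: "grouping N M H ps vs \<Longrightarrow> (\<forall>v\<in>set vs. \<not> absorbs v (pvec N M H p)) \<Longrightarrow>
          grouping N M H (ps @ [p]) (vs @ [pvec N M H p])"

definition vpkts :: "'d set \<Rightarrow> ('d \<Rightarrow> 'p option) \<Rightarrow> 'p set" where
  "vpkts N v = {p. \<exists>n\<in>N. v n = Some p}"

definition in_Ml :: "'d set \<Rightarrow> ('d \<Rightarrow> 'p option) \<Rightarrow> bool" where
  "in_Ml N v = ((\<forall>n\<in>N. v n \<noteq> None) \<and> (\<exists>a\<in>N. \<exists>b\<in>N. v a \<noteq> v b))"

definition can_send :: "('d \<Rightarrow> 'p set) \<Rightarrow> 'd \<Rightarrow> 'p set \<Rightarrow> bool" where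
  "can_send H n C = (C \<subseteq> H n)"

end

theory Submission
  imports Defs
begin

text \<open>Every vector produced by the grouping procedure is closed: a packet p occurs in it
exactly at the devices of N that want p (merging only ever fills NULL positions with the
vector of a new packet, which already has this shape). For a vector of \<open>M\<^sub>l\<close> this means
that device n misses only the packet in its own entry and holds all the others. Hence no
device holds the whole coded packet, while for two devices a, b with different entries
p \<noteq> q the split into {p} and the remaining packets is sent by b and a respectively.\<close>

definition closed_vec :: "'d set \<Rightarrow> 'p set \<Rightarrow> ('d \<Rightarrow> 'p set) \<Rightarrow> ('d \<Rightarrow> 'p option) \<Rightarrow> bool" where
  "closed_vec N M H v \<longleftrightarrow> (\<forall>n p. v n = Some p \<longrightarrow>
      n \<in> N \<and> p \<in> wants M H n \<and> (\<forall>m\<in>N. p \<in> wants M H m \<longrightarrow> v m = Some p))"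

lemma closed_vecD:
  assumes "closed_vec N M H v" and "v n = Some p"
  shows "n \<in> N" and "p \<in> wants M H n" and "\<And>m. m \<in> N \<Longrightarrow> p \<in> wants M H m \<Longrightarrow> v m = Some p"
  using assms unfolding closed_vec_def by blast+

lemma closed_vec_pvec: "closed_vec N M H (pvec N M H p)"
  unfolding closed_vec_def pvec_def by auto

lemma closed_vec_vadd:
  assumes "closed_vec N M H w" and "absorbs w (pvec N M H p)"
  shows "closed_vec N M H (vadd w (pvec N M H p))"
  unfolding closed_vec_def
proof (intro allI impI)
  fix n q
  assume sum: "vadd w (pvec N M H p) n = Some q"
  show "n \<in> N \<and> q \<in> wants M H n \<and> (\<forall>m\<in>N. q \<in> wants M H m \<longrightarrow> vadd w (pvec N M H p) m = Some q)"
  proof (cases "pvec N M H p n")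
    case None
    with sum have wn: "w n = Some q" by (simp add: vadd_def)
    have "vadd w (pvec N M H p) m = Some q" if "m \<in> N" "q \<in> wants M H m" for m
    proof -
      from closed_vecD(3)[OF assms(1) wn that] have "w m = Some q" .
      with assms(2) have "pvec N M H p m = None" unfolding absorbs_def by auto
      with \<open>w m = Some q\<close> show ?thesis by (simp add: vadd_def)
    qed
    with closed_vecD(1,2)[OF assms(1) wn] show ?thesis by blast
  next
    case (Some r)
    with sum show ?thesis by (auto simp: vadd_def pvec_def split: if_splits)
  qed
qed

lemma grouping_closed_vec:
  assumes "grouping N M H ps vs" and "v \<in> set vs"
  shows "closed_vec N M H v"
  using assms
proof (induction arbitrary: v rule: grouping.induct)
  case start
  then show ?case by simp
next
  case (merge ps vs i p)
  have "closed_vec N M H (vadd (vs ! i) (pvec N M H p))"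
    using merge.IH merge.hyps(2,3) by (auto intro: closed_vec_vadd)
  with merge.IH merge.prems show ?case
    using set_update_subset_insert by fastforce
next
  case (keep ps vs p)
  then show ?case using closed_vec_pvec by auto
qed

lemma closed_vec_not_holds:
  assumes "closed_vec N M H v" and "v n = Some p"
  shows "p \<notin> H n"
  using closed_vecD(2)[OF assms] by (simp add: wants_def)

lemma closed_vec_holds:
  assumes "closed_vec N M H v" and "b \<in> N" and "r \<in> vpkts N v" and "v b \<noteq> Some r"
  shows "r \<in> H b"
proof -
  obtain m where "v m = Some r" using assms(3) by (auto simp: vpkts_def)
  then have "r \<in> wants M H m" and "r \<notin> wants M H b"
    using closed_vecD(2,3)[OF assms(1)] assms(2,4) by blast+
  then show ?thesis by (simp add: wants_def)
qed

lemma closed_vec_not_can_send: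
  assumes "closed_vec N M H v" and "n \<in> N" and "v n \<noteq> None"
  shows "\<not> can_send H n (vpkts N v)"
proof -
  obtain p where "v n = Some p" using assms(3) by auto
  then have "p \<in> vpkts N v" and "p \<notin> H n"
    using assms(2) closed_vec_not_holds[OF assms(1)] by (auto simp: vpkts_def)
  then show ?thesis by (auto simp: can_send_def)
qed

lemma closed_vec_split:
  assumes "closed_vec N M H v" and "a \<in> N" "b \<in> N" and "v a = Some p" "v b = Some q" "p \<noteq> q"
  shows "can_send H b {p}" and "can_send H a (vpkts N v - {p})"
    and "p \<in> vpkts N v" and "q \<in> vpkts N v - {p}"
proof -
  show "p \<in> vpkts N v" and "q \<in> vpkts N v - {p}"
    using assms(2-6) by (auto simp: vpkts_def)
  then show "can_send H b {p}"
    using closed_vec_holds[OF assms(1) assms(3)] assms(5,6) by (simp add: can_send_def)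
  show "can_send H a (vpkts N v - {p})"
    using closed_vec_holds[OF assms(1) assms(2)] assms(4) by (auto simp: can_send_def)
qed

theorem lemma1:
  fixes N :: "'d set" and M :: "'p set" and H :: "'d \<Rightarrow> 'p set"
    and ps :: "'p list" and vs :: "('d \<Rightarrow> 'p option) list" and v :: "'d \<Rightarrow> 'p option"
  assumes "finite N" and "card N \<ge> 2"
    and "distinct ps" and "set ps = M"
    and "\<forall>n\<in>N. H n \<subseteq> M"
    and "\<forall>p\<in>M. \<exists>n\<in>N. p \<in> wants M H n"
    and "grouping N M H ps vs"
    and "v \<in> set vs" and "in_Ml N v"
  shows "(\<forall>n\<in>N. \<not> can_send H n (vpkts N v))
       \<and> (\<exists>A B. A \<noteq> {} \<and> B \<noteq> {} \<and> A \<inter> B = {} \<and> A \<union> B = vpkts N v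
               \<and> (\<exists>a\<in>N. can_send H a A) \<and> (\<exists>b\<in>N. can_send H b B))"
proof -
  have closed: "closed_vec N M H v" using grouping_closed_vec assms(7,8) .
  have full: "\<forall>n\<in>N. v n \<noteq> None" and "\<exists>a\<in>N. \<exists>b\<in>N. v a \<noteq> v b"
    using assms(9) unfolding in_Ml_def by auto
  then obtain a b where ab: "a \<in> N" "b \<in> N" and "v a \<noteq> v b" by blast
  moreover obtain p q where "v a = Some p" "v b = Some q" using full ab by blast
  ultimately have "p \<noteq> q" by simp
  note split = closed_vec_split[OF closed ab \<open>v a = Some p\<close> \<open>v b = Some q\<close> this]
  show ?thesis
  proof (intro conjI exI)
    show "\<forall>n\<in>N. \<not> can_send H n (vpkts N v)"
      using closed_vec_not_can_send[OF closed] full by blast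
    show "{p} \<union> (vpkts N v - {p}) = vpkts N v" using split(3) by blast
  qed (use split ab in auto)
qed

end
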